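(* Let $\mu,\nu\in\mathbb{R}$ and $\tau\in\mathbb{R}\setminus\{0\}$. On smooth functions $\Phi(x,t)$ on $\mathbb{R}^2$ define the operators $$H=\partial_t,\quad P=\partial_x,\quad K=-\nu t\,e^{-\tau\partial_t}\partial_x-\mu x\,\frac{e^{\tau\partial_t}-1}{\tau},\quad D=-x\partial_x-t\,\frac{1-e^{-\tau\partial_t}}{\tau},$$ $$C_1=(\mu x^2+\nu t^2e^{-\tau\partial_t})\frac{e^{\tau\partial_t}-1}{\tau}+2\nu xt\,\partial_x+\tau\nu(x\partial_x+x^2\partial_x^2),$$ $$C_2=-(\mu x^2+\nu t^2e^{-2\tau\partial_t})\partial_x-2\mu xt\,\frac{1-e^{-\tau\partial_t}}{\tau}+\tau\nu t\,e^{-2\tau\partial_t}\partial_x,$$ where $e^{a\partial_t}$ is the shift $\Phi(x,t)\mapsto\Phi(x,t+a)$ and $x,t$ denote multiplication operators. Then these operators satisfy the relations $[K,H]=\nu e^{-\tau H}P$, $[K,P]=\mu\frac{e^{\tau H}-1}{\tau}$, $[H,P]=0$, $[K,D]=0$, $[D,H]=\frac{1-e^{-\tau H}}{\tau}$, $[D,C_1]=-C_1+\tau\nu D^2$, $[H,C_1]=-2\nu D$, $[D,P]=P$, $[D,C_2]=-C_2$, $[P,C_2]=2\mu D$, $[K,C_1]=\nu C_2$, $[K,C_2]=\mu C_1-\tau\mu\nu D^2$, $[H,C_2]=e^{-\tau H}K+Ke^{-\tau H}$, $[P,C_1]=-2K-\tau\nu(DP+PD)$, $[C_1,C_2]=-\tau\nu(DC_2+C_2D)$.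 Moreover, with $$E_\tau=\nu\,\partial_x^2-\mu\Big(\frac{e^{\tau\partial_t}-1}{\tau}\Big)^2,$$ one has $[E_\tau,X]=0$ for $X\in\{K,H,P\}$, $[E_\tau,D]=-2E_\tau$, $[E_\tau,C_1]=4\nu(t+\tau+\tau x\partial_x)E_\tau$ and $[E_\tau,C_2]=-4\mu x\,E_\tau$. In particular each of $H,P,K,D,C_1,C_2$ maps solutions of $E_\tau\Phi=0$ to solutions of $E_\tau\Phi=0$. *)

theory Defs
  imports "HOL-Analysis.Analysis"
begin

type_synonym fn2 = "real \<Rightarrow> real \<Rightarrow> real"
type_synonym op2 = "fn2 \<Rightarrow> fn2"

definition Dx :: op2 where "Dx \<Phi> = (\<lambda>x t. deriv (\<lambda>y. \<Phi> y t) x)"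
definition Dt :: op2 where "Dt \<Phi> = (\<lambda>x t. deriv (\<lambda>s. \<Phi> x s) t)"

definition Sh :: "real \<Rightarrow> op2" where "Sh a \<Phi> = (\<lambda>x t. \<Phi> x (t + a))"

definition Mx :: op2 where "Mx \<Phi> = (\<lambda>x t. x * \<Phi> x t)"
definition Mt :: op2 where "Mt \<Phi> = (\<lambda>x t. t * \<Phi> x t)"
definition Sc :: "real \<Rightarrow> op2" where "Sc c \<Phi> = (\<lambda>x t. c * \<Phi> x t)"

definition opadd :: "op2 \<Rightarrow> op2 \<Rightarrow> op2" (infixl "\<oplus>" 65)
  where "A \<oplus> B = (\<lambda>\<Phi> x t. A \<Phi> x t + B \<Phi> x t)"
definition opsub :: "op2 \<Rightarrow> op2 \<Rightarrow> op2" (infixl "\<ominus>" 65)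
  where "A \<ominus> B = (\<lambda>\<Phi> x t. A \<Phi> x t - B \<Phi> x t)"
definition opzero :: op2 where "opzero = (\<lambda>\<Phi> x t. 0)"

definition comm :: "op2 \<Rightarrow> op2 \<Rightarrow> op2" where "comm A B = (A \<circ> B) \<ominus> (B \<circ> A)"

definition iter_partial :: "bool list \<Rightarrow> op2" where
  "iter_partial ds = foldr (\<lambda>b A. (if b then Dx else Dt) \<circ> A) ds id"

definition smooth2 :: "fn2 \<Rightarrow> bool" where
  "smooth2 \<Phi> \<longleftrightarrow> (\<forall>ds. continuous_on UNIV (\<lambda>(x,t). iter_partial ds \<Phi> x t) \<and>
      (\<forall>x t. (\<lambda>y. iter_partial ds \<Phi> y t) differentiable (at x) \<and>
             (\<lambda>s. iter_partial ds \<Phi> x s) differentiable (at t)))"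

definition opH :: op2 where "opH = Dt"
definition opP :: op2 where "opP = Dx"

definition fwd :: "real \<Rightarrow> op2" where "fwd \<tau> = Sc (1/\<tau>) \<circ> (Sh \<tau> \<ominus> id)"
definition bwd :: "real \<Rightarrow> op2" where "bwd \<tau> = Sc (1/\<tau>) \<circ> (id \<ominus> Sh (-\<tau>))"

definition opK :: "real \<Rightarrow> real \<Rightarrow> real \<Rightarrow> op2" where
  "opK \<mu> \<nu> \<tau> = (Sc (-\<nu>) \<circ> Mt \<circ> Sh (-\<tau>) \<circ> Dx) \<ominus> (Sc \<mu> \<circ> Mx \<circ> fwd \<tau>)"

definition opD :: "real \<Rightarrow> op2" where
  "opD \<tau> = (Sc (-1) \<circ> Mx \<circ> Dx) \<ominus> (Mt \<circ> bwd \<tau>)"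

definition opC1 :: "real \<Rightarrow> real \<Rightarrow> real \<Rightarrow> op2" where
  "opC1 \<mu> \<nu> \<tau> =
     (((Sc \<mu> \<circ> Mx \<circ> Mx) \<oplus> (Sc \<nu> \<circ> Mt \<circ> Mt \<circ> Sh (-\<tau>))) \<circ> fwd \<tau>)
     \<oplus> (Sc (2 * \<nu>) \<circ> Mx \<circ> Mt \<circ> Dx)
     \<oplus> (Sc (\<tau> * \<nu>) \<circ> ((Mx \<circ> Dx) \<oplus> (Mx \<circ> Mx \<circ> Dx \<circ> Dx)))"

definition opC2 :: "real \<Rightarrow> real \<Rightarrow> real \<Rightarrow> op2" where
  "opC2 \<mu> \<nu> \<tau> =
     (Sc (-1) \<circ> ((Sc \<mu> \<circ> Mx \<circ> Mx) \<oplus> (Sc \<nu> \<circ> Mt \<circ> Mt \<circ> Sh (-2 * \<tau>))) \<circ> Dx)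
     \<ominus> (Sc (2 * \<mu>) \<circ> Mx \<circ> Mt \<circ> bwd \<tau>)
     \<oplus> (Sc (\<tau> * \<nu>) \<circ> Mt \<circ> Sh (-2 * \<tau>) \<circ> Dx)"

definition opE :: "real \<Rightarrow> real \<Rightarrow> real \<Rightarrow> op2" where
  "opE \<mu> \<nu> \<tau> = (Sc \<nu> \<circ> Dx \<circ> Dx) \<ominus> (Sc \<mu> \<circ> fwd \<tau> \<circ> fwd \<tau>)"

end

theory Submission
  imports Defs
begin

text \<open>Applied to a smooth \<Phi> and evaluated at a point (x, t), both sides of each relation
  become polynomials in x, t, \<tau> and 1/\<tau> whose coefficients are iterated partial
  derivatives (d/dx)^m (d/dt)^n \<Phi> taken at shifted points (x, t + k \<tau>). The only analytic
  input is Schwarz's theorem: the mixed partials of a smooth function commute, so these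
  derivatives form a normal form, and each relation reduces to a polynomial identity (using
  \<tau> (1/\<tau>) = 1 where \<tau> \<noteq> 0 is needed). For every generator X the commutator [E, X] has
  the form Y \<circ> E with Y linear, hence X maps solutions of E \<Phi> = 0 to solutions.\<close>

lemma field_differentiable_iff_differentiable_real:
  "(f :: real \<Rightarrow> real) field_differentiable (at x) \<longleftrightarrow> f differentiable (at x)"
  by (simp add: field_differentiable_def real_differentiable_def)

lemma mean_value_deriv:
  fixes f :: "real \<Rightarrow> real"
  assumes "\<And>z. f differentiable (at z)" and "a < b"
  obtains z where "a < z" "z < b" "f b - f a = (b - a) * deriv f z"
  using MVT2[of a b f "deriv f"] assms DERIV_deriv_iff_real_differentiable by blast

lemma second_difference_eq_Dt_Dx:
  fixes g :: fn2
  assumes dx: "\<And>x t. (\<lambda>y. g y t) differentiable (at x)"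
    and dxt: "\<And>x t. (\<lambda>s. Dx g x s) differentiable (at t)"
    and "h > 0"
  obtains \<xi> \<eta> where "x < \<xi>" "\<xi> < x + h" "t < \<eta>" "\<eta> < t + h"
    and "g (x+h) (t+h) - g (x+h) t - g x (t+h) + g x t = h * h * Dt (Dx g) \<xi> \<eta>"
proof -
  have "(\<lambda>y. g y (t+h) - g y t) differentiable (at z)" for z
    using dx by (intro differentiable_diff)
  moreover have "deriv (\<lambda>y. g y (t+h) - g y t) z = Dx g z (t+h) - Dx g z t" for z
    using dx by (simp add: Dx_def field_differentiable_iff_differentiable_real)
  ultimately obtain \<xi> where "x < \<xi>" "\<xi> < x + h"
    and "g (x+h) (t+h) - g (x+h) t - (g x (t+h) - g x t) = h * (Dx g \<xi> (t+h) - Dx g \<xi> t)"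
    using mean_value_deriv[of "\<lambda>y. g y (t+h) - g y t" x "x+h"] \<open>h > 0\<close> by auto
  moreover obtain \<eta> where "t < \<eta>" "\<eta> < t + h" and "Dx g \<xi> (t+h) - Dx g \<xi> t = h * Dt (Dx g) \<xi> \<eta>"
    using mean_value_deriv[of "Dx g \<xi>" t "t+h"] dxt \<open>h > 0\<close> by (auto simp: Dt_def)
  ultimately show thesis
    using that by (simp add: algebra_simps)
qed

lemma second_difference_eq_Dx_Dt:
  fixes g :: fn2
  assumes dt: "\<And>x t. (\<lambda>s. g x s) differentiable (at t)"
    and dtx: "\<And>x t. (\<lambda>y. Dt g y t) differentiable (at x)"
    and "h > 0"
  obtains \<xi> \<eta> where "x < \<xi>" "\<xi> < x + h" "t < \<eta>" "\<eta> < t + h"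
    and "g (x+h) (t+h) - g (x+h) t - g x (t+h) + g x t = h * h * Dx (Dt g) \<xi> \<eta>"
proof -
  let ?g = "\<lambda>a b. g b a"
  have "(\<lambda>y. ?g y s) differentiable (at r)" "(\<lambda>y. Dx ?g r y) differentiable (at s)" for r s
    using dt dtx by (simp_all add: Dx_def Dt_def)
  then obtain \<eta> \<xi> where "t < \<eta>" "\<eta> < t + h" "x < \<xi>" "\<xi> < x + h"
    and "?g (t+h) (x+h) - ?g (t+h) x - ?g t (x+h) + ?g t x = h * h * Dt (Dx ?g) \<eta> \<xi>"
    using second_difference_eq_Dt_Dx[of ?g h t x] \<open>h > 0\<close> by metis
  moreover have "Dt (Dx ?g) \<eta> \<xi> = Dx (Dt g) \<xi> \<eta>"
    by (simp add: Dx_def Dt_def)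
  ultimately show thesis
    using that by (simp add: algebra_simps)
qed

lemma Dt_Dx_eq_Dx_Dt:
  fixes g :: fn2
  assumes dx: "\<And>x t. (\<lambda>y. g y t) differentiable (at x)"
    and dt: "\<And>x t. (\<lambda>s. g x s) differentiable (at t)"
    and dxt: "\<And>x t. (\<lambda>s. Dx g x s) differentiable (at t)"
    and dtx: "\<And>x t. (\<lambda>y. Dt g y t) differentiable (at x)"
    and cont_xt: "continuous_on UNIV (\<lambda>(x,t). Dt (Dx g) x t)"
    and cont_tx: "continuous_on UNIV (\<lambda>(x,t). Dx (Dt g) x t)"
  shows "Dt (Dx g) x t = Dx (Dt g) x t"
proof -
  let ?a = "Dt (Dx g) x t" and ?b = "Dx (Dt g) x t"
  have approx: "\<bar>?a - ?b\<bar> < 2 * e" if "e > 0" for e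
  proof -
    have "isCont (\<lambda>(x,t). Dt (Dx g) x t) (x,t)" and "isCont (\<lambda>(x,t). Dx (Dt g) x t) (x,t)"
      using cont_xt cont_tx by (simp_all add: continuous_on_eq_continuous_at)
    then obtain d1 d2 where "d1 > 0" "d2 > 0"
      and d1: "\<And>p. dist p (x,t) < d1 \<Longrightarrow> dist ((\<lambda>(x,t). Dt (Dx g) x t) p) ?a < e"
      and d2: "\<And>p. dist p (x,t) < d2 \<Longrightarrow> dist ((\<lambda>(x,t). Dx (Dt g) x t) p) ?b < e"
      using \<open>e > 0\<close> unfolding continuous_at_eps_delta by (metis case_prod_conv)
    define h where "h = min d1 d2 / 2"
    have "h > 0" using \<open>d1 > 0\<close> \<open>d2 > 0\<close> by (simp add: h_def)
    have near: "dist (p, q) (x, t) < min d1 d2" if "x < p" "p < x + h" "t < q" "q < t + h" for p q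
    proof -
      have "dist (p, q) (x, t) \<le> dist p x + dist q t"
        using sqrt_sum_squares_le_sum_abs[of "dist p x" "dist q t"] by (simp add: dist_Pair_Pair)
      also have "\<dots> < min d1 d2" using that by (simp add: dist_real_def h_def min_def)
      finally show ?thesis .
    qed
    obtain \<xi> \<eta> where "x < \<xi>" "\<xi> < x + h" "t < \<eta>" "\<eta> < t + h"
      and xt: "g (x+h) (t+h) - g (x+h) t - g x (t+h) + g x t = h * h * Dt (Dx g) \<xi> \<eta>"
      using second_difference_eq_Dt_Dx[OF dx dxt \<open>h > 0\<close>] by blast
    moreover obtain \<xi>' \<eta>' where "x < \<xi>'" "\<xi>' < x + h" "t < \<eta>'" "\<eta>' < t + h"
      and tx: "g (x+h) (t+h) - g (x+h) t - g x (t+h) + g x t = h * h * Dx (Dt g) \<xi>' \<eta>'"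
      using second_difference_eq_Dx_Dt[OF dt dtx \<open>h > 0\<close>] by blast
    moreover have "Dt (Dx g) \<xi> \<eta> = Dx (Dt g) \<xi>' \<eta>'"
      using xt tx \<open>h > 0\<close> by simp
    ultimately have "dist (Dt (Dx g) \<xi> \<eta>) ?a < e" and "dist (Dt (Dx g) \<xi> \<eta>) ?b < e"
      using d1[of "(\<xi>, \<eta>)"] d2[of "(\<xi>', \<eta>')"] near[of \<xi> \<eta>] near[of \<xi>' \<eta>'] by simp_all
    then show ?thesis
      by (simp add: dist_real_def)
  qed
  show ?thesis
  proof (rule ccontr)
    assume "?a \<noteq> ?b"
    then show False
      using approx[of "\<bar>?a - ?b\<bar> / 2"] by simp
  qed
qed

lemma iter_partial_Nil [simp]: "iter_partial [] f = f"
  by (simp add: iter_partial_def)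

lemma iter_partial_Dx: "iter_partial ds (Dx f) = iter_partial (ds @ [True]) f"
  by (induction ds) (simp_all add: iter_partial_def)

lemma iter_partial_Dt: "iter_partial ds (Dt f) = iter_partial (ds @ [False]) f"
  by (induction ds) (simp_all add: iter_partial_def)

lemma smooth2_Dx [simp]: "smooth2 f \<Longrightarrow> smooth2 (Dx f)"
  unfolding smooth2_def iter_partial_Dx by blast

lemma smooth2_Dt [simp]: "smooth2 f \<Longrightarrow> smooth2 (Dt f)"
  unfolding smooth2_def iter_partial_Dt by blast

lemma
  assumes "smooth2 f"
  shows smooth2_continuous: "continuous_on UNIV (\<lambda>(x,t). f x t)"
    and smooth2_differentiable_x: "(\<lambda>y. f y t) differentiable (at x)"
    and smooth2_differentiable_t: "(\<lambda>s. f x s) differentiable (at t)"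
  using assms[unfolded smooth2_def, THEN spec, of "[]"] by simp_all

lemma smooth2_Dt_Dx: "smooth2 f \<Longrightarrow> Dt (Dx f) = Dx (Dt f)"
  by (intro ext Dt_Dx_eq_Dx_Dt)
    (simp_all add: smooth2_continuous smooth2_differentiable_x smooth2_differentiable_t)

text \<open>The differentiation rules below are stated for
  \<^term>\<open>Dxt m n f\<close> rather than for \<^term>\<open>f\<close> so that their left-hand sides are
  higher-order patterns, which the simplifier can match under binders.\<close>

definition Dxt :: "nat \<Rightarrow> nat \<Rightarrow> op2" where
  "Dxt m n = (Dx ^^ m) \<circ> (Dt ^^ n)"

lemma smooth2_funpow_Dx: "smooth2 f \<Longrightarrow> smooth2 ((Dx ^^ m) f)"
  by (induction m) simp_all

lemma smooth2_funpow_Dt: "smooth2 f \<Longrightarrow> smooth2 ((Dt ^^ n) f)"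
  by (induction n) simp_all

lemma smooth2_Dxt: "smooth2 f \<Longrightarrow> smooth2 (Dxt m n f)"
  by (simp add: Dxt_def smooth2_funpow_Dx smooth2_funpow_Dt)

lemma Dt_funpow_Dx: "smooth2 f \<Longrightarrow> Dt ((Dx ^^ m) f) = (Dx ^^ m) (Dt f)"
  by (induction m) (simp_all add: smooth2_Dt_Dx smooth2_funpow_Dx)

lemma Dx_Dxt: "Dx (Dxt m n f) = Dxt (Suc m) n f"
  by (simp add: Dxt_def)

lemma Dt_Dxt: "smooth2 f \<Longrightarrow> Dt (Dxt m n f) = Dxt m (Suc n) f"
  by (simp add: Dxt_def Dt_funpow_Dx smooth2_funpow_Dt)

lemma
  assumes "smooth2 f"
  shows deriv_x_Dxt: "deriv (\<lambda>y. Dxt m n f y t) x = Dxt (Suc m) n f x t"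
    and deriv_t_Dxt: "deriv (Dxt m n f x) t = Dxt m (Suc n) f x t"
    and field_differentiable_x_Dxt: "(\<lambda>y. Dxt m n f y t) field_differentiable (at x)"
    and field_differentiable_t_Dxt: "Dxt m n f x field_differentiable (at t)"
  using Dx_Dxt[of m n f] Dt_Dxt[OF assms, of m n] smooth2_Dxt[OF assms, of m n]
  by (simp_all add: Dx_def Dt_def fun_eq_iff field_differentiable_iff_differentiable_real
      smooth2_differentiable_x smooth2_differentiable_t)

lemma
  assumes "smooth2 f" and "g field_differentiable (at t)"
  shows deriv_t_Dxt_chain: "deriv (\<lambda>s. Dxt m n f x (g s)) t = Dxt m (Suc n) f x (g t) * deriv g t"
    and field_differentiable_t_Dxt_chain: "(\<lambda>s. Dxt m n f x (g s)) field_differentiable (at t)"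
  using deriv_chain[OF assms(2) field_differentiable_t_Dxt[OF assms(1)]]
    field_differentiable_compose[OF assms(2) field_differentiable_t_Dxt[OF assms(1)]]
  by (simp_all add: o_def deriv_t_Dxt[OF assms(1)])

text \<open>Fully applied forms of the operators. Unfolding them as functions instead would create
  abstractions over the argument function, which get eta-contracted out of reach of the
  differentiation rules.\<close>

lemma operator_apply:
  "(A \<oplus> B) f x t = A f x t + B f x t"
  "(A \<ominus> B) f x t = A f x t - B f x t"
  "opzero f x t = 0"
  "Sc c f x t = c * f x t"
  "Mx f x t = x * f x t"
  "Mt f x t = t * f x t"
  "Sh a f x t = f x (t + a)"
  "Dx f x t = deriv (\<lambda>y. f y t) x"
  "Dt f x t = deriv (\<lambda>s. f x s) t"
  by (simp_all add: opadd_def opsub_def opzero_def Sc_def Mx_def Mt_def Sh_def Dx_def Dt_def)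

text \<open>With \<^term>\<open>inverse \<tau>\<close> in place of \<^term>\<open>1 / \<tau>\<close> the simplifier keeps the scalar
  as a factor instead of turning the expressions into quotients.\<close>

lemma fwd_eq_inverse: "fwd \<tau> = Sc (inverse \<tau>) \<circ> (Sh \<tau> \<ominus> id)"
  and bwd_eq_inverse: "bwd \<tau> = Sc (inverse \<tau>) \<circ> (id \<ominus> Sh (-\<tau>))"
  by (simp_all add: fwd_def bwd_def inverse_eq_divide)

lemma mult_inverse_cancel_left: "a \<noteq> 0 \<Longrightarrow> a * (inverse a * b) = (b :: 'a :: field)"
  by (simp add: mult.assoc[symmetric])

lemmas operator_simps = comm_def opH_def opP_def opK_def opD_def opC1_def opC2_def opE_def
  operator_apply comp_apply id_apply fwd_eq_inverse bwd_eq_inverse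

context
  fixes \<Phi> :: fn2
  assumes smooth: "smooth2 \<Phi>"
begin

text \<open>Rewriting with this rule puts \<Phi> itself into normal form; it does not loop because
  \<Phi> occurs unapplied on the right.\<close>

lemma apply_eq_Dxt_0_0: "\<Phi> x = Dxt 0 0 \<Phi> x"
  by (simp add: Dxt_def)

lemmas pointwise_normal_form = operator_simps fun_eq_iff apply_eq_Dxt_0_0
  deriv_x_Dxt[OF smooth] deriv_t_Dxt[OF smooth] deriv_t_Dxt_chain[OF smooth]
  field_differentiable_x_Dxt[OF smooth] field_differentiable_t_Dxt[OF smooth]
  field_differentiable_t_Dxt_chain[OF smooth] field_differentiable_add field_differentiable_diff
  field_differentiable_mult field_differentiable_minus

lemma comm_opK_opH:
  "comm (opK \<mu> \<nu> \<tau>) opH \<Phi> = (Sc \<nu> \<circ> Sh (-\<tau>) \<circ> opP) \<Phi>"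
  by (simp add: pointwise_normal_form; simp add: algebra_simps)

lemma comm_opK_opP:
  "comm (opK \<mu> \<nu> \<tau>) opP \<Phi> = (Sc \<mu> \<circ> fwd \<tau>) \<Phi>"
  by (simp add: pointwise_normal_form; simp add: algebra_simps)

lemma comm_opH_opP:
  "comm opH opP \<Phi> = opzero \<Phi>"
  by (simp add: pointwise_normal_form; simp add: algebra_simps)

lemma comm_opK_opD:
  assumes "\<tau> \<noteq> 0"
  shows "comm (opK \<mu> \<nu> \<tau>) (opD \<tau>) \<Phi> = opzero \<Phi>"
  using assms by (simp add: pointwise_normal_form; simp add: algebra_simps mult_inverse_cancel_left)

lemma comm_opD_opH:
  "comm (opD \<tau>) opH \<Phi> = bwd \<tau> \<Phi>"
  by (simp add: pointwise_normal_form; simp add: algebra_simps)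

lemma comm_opD_opC1:
  assumes "\<tau> \<noteq> 0"
  shows "comm (opD \<tau>) (opC1 \<mu> \<nu> \<tau>) \<Phi> = ((Sc (-1) \<circ> opC1 \<mu> \<nu> \<tau>) \<oplus> (Sc (\<tau> * \<nu>) \<circ> opD \<tau> \<circ> opD \<tau>)) \<Phi>"
  using assms by (simp add: pointwise_normal_form; simp add: algebra_simps mult_inverse_cancel_left)

lemma comm_opH_opC1:
  "comm opH (opC1 \<mu> \<nu> \<tau>) \<Phi> = (Sc (-2 * \<nu>) \<circ> opD \<tau>) \<Phi>"
  by (simp add: pointwise_normal_form; simp add: algebra_simps)

lemma comm_opD_opP:
  "comm (opD \<tau>) opP \<Phi> = opP \<Phi>"
  by (simp add: pointwise_normal_form; simp add: algebra_simps)

lemma comm_opD_opC2: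
  assumes "\<tau> \<noteq> 0"
  shows "comm (opD \<tau>) (opC2 \<mu> \<nu> \<tau>) \<Phi> = (Sc (-1) \<circ> opC2 \<mu> \<nu> \<tau>) \<Phi>"
  using assms by (simp add: pointwise_normal_form; simp add: algebra_simps mult_inverse_cancel_left)

lemma comm_opP_opC2:
  "comm opP (opC2 \<mu> \<nu> \<tau>) \<Phi> = (Sc (2 * \<mu>) \<circ> opD \<tau>) \<Phi>"
  by (simp add: pointwise_normal_form; simp add: algebra_simps)

lemma comm_opK_opC1:
  assumes "\<tau> \<noteq> 0"
  shows "comm (opK \<mu> \<nu> \<tau>) (opC1 \<mu> \<nu> \<tau>) \<Phi> = (Sc \<nu> \<circ> opC2 \<mu> \<nu> \<tau>) \<Phi>"
  using assms by (simp add: pointwise_normal_form; simp add: algebra_simps mult_inverse_cancel_left)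

lemma comm_opK_opC2:
  assumes "\<tau> \<noteq> 0"
  shows "comm (opK \<mu> \<nu> \<tau>) (opC2 \<mu> \<nu> \<tau>) \<Phi> = ((Sc \<mu> \<circ> opC1 \<mu> \<nu> \<tau>) \<ominus> (Sc (\<tau> * \<mu> * \<nu>) \<circ> opD \<tau> \<circ> opD \<tau>)) \<Phi>"
  using assms by (simp add: pointwise_normal_form; simp add: algebra_simps mult_inverse_cancel_left)

lemma comm_opH_opC2:
  "comm opH (opC2 \<mu> \<nu> \<tau>) \<Phi> = ((Sh (-\<tau>) \<circ> opK \<mu> \<nu> \<tau>) \<oplus> (opK \<mu> \<nu> \<tau> \<circ> Sh (-\<tau>))) \<Phi>"
  by (simp add: pointwise_normal_form; simp add: algebra_simps)

lemma comm_opP_opC1: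
  assumes "\<tau> \<noteq> 0"
  shows "comm opP (opC1 \<mu> \<nu> \<tau>) \<Phi> = ((Sc (-2) \<circ> opK \<mu> \<nu> \<tau>) \<ominus> (Sc (\<tau> * \<nu>) \<circ> ((opD \<tau> \<circ> opP) \<oplus> (opP \<circ> opD \<tau>)))) \<Phi>"
  using assms by (simp add: pointwise_normal_form; simp add: algebra_simps mult_inverse_cancel_left)

lemma comm_opC1_opC2:
  assumes "\<tau> \<noteq> 0"
  shows "comm (opC1 \<mu> \<nu> \<tau>) (opC2 \<mu> \<nu> \<tau>) \<Phi> = (Sc (-\<tau> * \<nu>) \<circ> ((opD \<tau> \<circ> opC2 \<mu> \<nu> \<tau>) \<oplus> (opC2 \<mu> \<nu> \<tau> \<circ> opD \<tau>))) \<Phi>"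
  using assms by (simp add: pointwise_normal_form; simp add: algebra_simps mult_inverse_cancel_left)

lemma comm_opE_opK:
  assumes "\<tau> \<noteq> 0"
  shows "comm (opE \<mu> \<nu> \<tau>) (opK \<mu> \<nu> \<tau>) \<Phi> = opzero \<Phi>"
  using assms by (simp add: pointwise_normal_form; simp add: algebra_simps mult_inverse_cancel_left)

lemma comm_opE_opH:
  "comm (opE \<mu> \<nu> \<tau>) opH \<Phi> = opzero \<Phi>"
  by (simp add: pointwise_normal_form; simp add: algebra_simps)

lemma comm_opE_opP:
  "comm (opE \<mu> \<nu> \<tau>) opP \<Phi> = opzero \<Phi>"
  by (simp add: pointwise_normal_form; simp add: algebra_simps)

lemma comm_opE_opD:
  assumes "\<tau> \<noteq> 0"
  shows "comm (opE \<mu> \<nu> \<tau>) (opD \<tau>) \<Phi> = (Sc (-2) \<circ> opE \<mu> \<nu> \<tau>) \<Phi>"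
  using assms by (simp add: pointwise_normal_form; simp add: algebra_simps mult_inverse_cancel_left)

lemma comm_opE_opC1:
  assumes "\<tau> \<noteq> 0"
  shows "comm (opE \<mu> \<nu> \<tau>) (opC1 \<mu> \<nu> \<tau>) \<Phi> = (Sc (4 * \<nu>) \<circ> (Mt \<oplus> Sc \<tau> \<oplus> (Sc \<tau> \<circ> Mx \<circ> Dx)) \<circ> opE \<mu> \<nu> \<tau>) \<Phi>"
  using assms by (simp add: pointwise_normal_form; simp add: algebra_simps mult_inverse_cancel_left)

lemma comm_opE_opC2:
  assumes "\<tau> \<noteq> 0"
  shows "comm (opE \<mu> \<nu> \<tau>) (opC2 \<mu> \<nu> \<tau>) \<Phi> = (Sc (-4 * \<mu>) \<circ> Mx \<circ> opE \<mu> \<nu> \<tau>) \<Phi>"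
  using assms by (simp add: pointwise_normal_form; simp add: algebra_simps mult_inverse_cancel_left)

end

lemma comm_eq_imp_kernel_invariant:
  assumes "comm E X \<Phi> = Y (E \<Phi>)" and "E \<Phi> = (\<lambda>x t. 0)"
    and "X (\<lambda>x t. 0) = (\<lambda>x t. 0)" and "Y (\<lambda>x t. 0) = (\<lambda>x t. 0)"
  shows "E (X \<Phi>) = (\<lambda>x t. 0)"
proof (intro ext)
  fix x t
  have "E (X \<Phi>) x t = comm E X \<Phi> x t + X (E \<Phi>) x t"
    by (simp add: comm_def opsub_def)
  also have "\<dots> = 0"
    using assms by simp
  finally show "E (X \<Phi>) x t = 0" .
qed

lemma opE_kernel_invariant:
  assumes "\<tau> \<noteq> 0" and "smooth2 \<Phi>" and "opE \<mu> \<nu> \<tau> \<Phi> = opzero \<Phi>"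
    and "X \<in> {opH, opP, opK \<mu> \<nu> \<tau>, opD \<tau>, opC1 \<mu> \<nu> \<tau>, opC2 \<mu> \<nu> \<tau>}"
  shows "opE \<mu> \<nu> \<tau> (X \<Phi>) = opzero \<Phi>"
proof -
  let ?E = "opE \<mu> \<nu> \<tau>" and ?z = "\<lambda>x t. 0 :: real"
  have E\<Phi>: "?E \<Phi> = ?z" using assms(3) by (simp add: opzero_def)
  have X0: "X ?z = ?z" using assms(4) by (auto simp: operator_simps fun_eq_iff)
  have invariant: "?E (X \<Phi>) = opzero \<Phi>" if "comm ?E X \<Phi> = Y (?E \<Phi>)" and "Y ?z = ?z" for Y
    using comm_eq_imp_kernel_invariant[of ?E X \<Phi> Y] that E\<Phi> X0 by (simp add: opzero_def)
  from assms(4) show ?thesis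
  proof (elim insertE emptyE)
    assume X: "X = opH"
    show ?thesis
      using comm_opE_opH[OF assms(2)] by (intro invariant[of opzero]) (simp_all add: X opzero_def)
  next
    assume X: "X = opP"
    show ?thesis
      using comm_opE_opP[OF assms(2)] by (intro invariant[of opzero]) (simp_all add: X opzero_def)
  next
    assume X: "X = opK \<mu> \<nu> \<tau>"
    show ?thesis
      using comm_opE_opK[OF assms(2,1)] by (intro invariant[of opzero]) (simp_all add: X opzero_def)
  next
    assume X: "X = opD \<tau>"
    show ?thesis
      using comm_opE_opD[OF assms(2,1)] by (intro invariant[of "Sc (-2)"]) (simp_all add: X Sc_def)
  next
    assume X: "X = opC1 \<mu> \<nu> \<tau>"
    show ?thesis
      using comm_opE_opC1[OF assms(2,1)]
      by (intro invariant[of "Sc (4 * \<nu>) \<circ> (Mt \<oplus> Sc \<tau> \<oplus> (Sc \<tau> \<circ> Mx \<circ> Dx))"])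
        (simp_all add: X operator_apply fun_eq_iff)
  next
    assume X: "X = opC2 \<mu> \<nu> \<tau>"
    show ?thesis
      using comm_opE_opC2[OF assms(2,1)]
      by (intro invariant[of "Sc (-4 * \<mu>) \<circ> Mx"]) (simp_all add: X operator_apply fun_eq_iff)
  qed
qed

theorem mainTheorem2:
  fixes \<mu> \<nu> \<tau> :: real and \<Phi> :: fn2
  assumes "\<tau> \<noteq> 0" and "smooth2 \<Phi>"
  defines "H \<equiv> opH" and "P \<equiv> opP" and "K \<equiv> opK \<mu> \<nu> \<tau>" and "D \<equiv> opD \<tau>"
    and "C1 \<equiv> opC1 \<mu> \<nu> \<tau>" and "C2 \<equiv> opC2 \<mu> \<nu> \<tau>" and "E \<equiv> opE \<mu> \<nu> \<tau>"
  shows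
    "comm K H \<Phi> = (Sc \<nu> \<circ> Sh (-\<tau>) \<circ> P) \<Phi> \<and>
     comm K P \<Phi> = (Sc \<mu> \<circ> fwd \<tau>) \<Phi> \<and>
     comm H P \<Phi> = opzero \<Phi> \<and>
     comm K D \<Phi> = opzero \<Phi> \<and>
     comm D H \<Phi> = bwd \<tau> \<Phi> \<and>
     comm D C1 \<Phi> = ((Sc (-1) \<circ> C1) \<oplus> (Sc (\<tau> * \<nu>) \<circ> D \<circ> D)) \<Phi> \<and>
     comm H C1 \<Phi> = (Sc (-2 * \<nu>) \<circ> D) \<Phi> \<and>
     comm D P \<Phi> = P \<Phi> \<and>
     comm D C2 \<Phi> = (Sc (-1) \<circ> C2) \<Phi> \<and>
     comm P C2 \<Phi> = (Sc (2 * \<mu>) \<circ> D) \<Phi> \<and>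
     comm K C1 \<Phi> = (Sc \<nu> \<circ> C2) \<Phi> \<and>
     comm K C2 \<Phi> = ((Sc \<mu> \<circ> C1) \<ominus> (Sc (\<tau> * \<mu> * \<nu>) \<circ> D \<circ> D)) \<Phi> \<and>
     comm H C2 \<Phi> = ((Sh (-\<tau>) \<circ> K) \<oplus> (K \<circ> Sh (-\<tau>))) \<Phi> \<and>
     comm P C1 \<Phi> = ((Sc (-2) \<circ> K) \<ominus> (Sc (\<tau> * \<nu>) \<circ> ((D \<circ> P) \<oplus> (P \<circ> D)))) \<Phi> \<and>
     comm C1 C2 \<Phi> = (Sc (-\<tau> * \<nu>) \<circ> ((D \<circ> C2) \<oplus> (C2 \<circ> D))) \<Phi> \<and>
     comm E K \<Phi> = opzero \<Phi> \<and>
     comm E H \<Phi> = opzero \<Phi> \<and>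
     comm E P \<Phi> = opzero \<Phi> \<and>
     comm E D \<Phi> = (Sc (-2) \<circ> E) \<Phi> \<and>
     comm E C1 \<Phi> = (Sc (4 * \<nu>) \<circ> (Mt \<oplus> Sc \<tau> \<oplus> (Sc \<tau> \<circ> Mx \<circ> Dx)) \<circ> E) \<Phi> \<and>
     comm E C2 \<Phi> = (Sc (-4 * \<mu>) \<circ> Mx \<circ> E) \<Phi> \<and>
     (E \<Phi> = opzero \<Phi> \<longrightarrow> (\<forall>X \<in> {H, P, K, D, C1, C2}. E (X \<Phi>) = opzero \<Phi>))"
proof -
  note relations = comm_opK_opH comm_opK_opP comm_opH_opP comm_opK_opD comm_opD_opH comm_opD_opC1
    comm_opH_opC1 comm_opD_opP comm_opD_opC2 comm_opP_opC2 comm_opK_opC1 comm_opK_opC2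
    comm_opH_opC2 comm_opP_opC1 comm_opC1_opC2 comm_opE_opK comm_opE_opH comm_opE_opP
    comm_opE_opD comm_opE_opC1 comm_opE_opC2
  show ?thesis
    unfolding H_def P_def K_def D_def C1_def C2_def E_def
    using assms(1,2) by (simp add: relations) (blast intro: opE_kernel_invariant[OF assms(1,2)])
qed

end
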